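(* Let $n$ agents share an additive valuation $v$ with nonnegative item values, and let items $g_1,\dots,g_T$ lie on a line. For $t\in[T]$ let $X^t$ be the contiguous leximin$^2$ allocation of $M_t=\{g_1,\dots,g_t\}$. Then for every $t<T$ and every $j\in[n]$, $P_j(X^t)\le P_j(X^{t+1})$.
   Context: Contiguous allocation of $M_t$: agent $j$ receives the $j$-th block from the left. For a contiguous allocation $A$, $P(A)=(\ell_0,\dots,\ell_n)$ with $\ell_0=0$ and $P_j(A)=\ell_j$ the index of the last item of $A_j$. A leximin allocation is a contiguous allocation maximizing the lowest agent value, subject to that the second-lowest, and so on. The leximin$^2$ allocation is the leximin contiguous allocation with lexicographically smallest $P(A)$. *)

theory Defs
  imports Complex_Main
begin

text \<open>Items are g_1,...,g_T indexed by 1..T; the common additive valuation is given by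
  item values w :: nat => real. A contiguous allocation of M_t = {g_1..g_t} to n agents
  is represented by its cut vector P(A) = (l_0,...,l_n) as a list of length n+1 with
  l_0 = 0, l_n = t, nondecreasing; agent j gets items l_(j-1)+1 .. l_j (possibly empty).\<close>

definition contig :: "nat \<Rightarrow> nat \<Rightarrow> nat list \<Rightarrow> bool" where
  "contig n t ps \<longleftrightarrow> length ps = n + 1 \<and> ps ! 0 = 0 \<and> ps ! n = t \<and> sorted ps"

definition agent_val :: "(nat \<Rightarrow> real) \<Rightarrow> nat list \<Rightarrow> nat \<Rightarrow> real" where
  "agent_val w ps j = (\<Sum>i \<in> {ps ! (j - 1) + 1 .. ps ! j}. w i)"

definition vals :: "(nat \<Rightarrow> real) \<Rightarrow> nat \<Rightarrow> nat list \<Rightarrow> real list" where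
  "vals w n ps = map (agent_val w ps) [1..<n + 1]"

definition lex_less :: "'a::linorder list \<Rightarrow> 'a list \<Rightarrow> bool" where
  "lex_less xs ys \<longleftrightarrow> (\<exists>k < min (length xs) (length ys).
      take k xs = take k ys \<and> xs ! k < ys ! k)"

definition leximin :: "(nat \<Rightarrow> real) \<Rightarrow> nat \<Rightarrow> nat \<Rightarrow> nat list \<Rightarrow> bool" where
  "leximin w n t ps \<longleftrightarrow> contig n t ps \<and>
     (\<forall>qs. contig n t qs \<longrightarrow> \<not> lex_less (sort (vals w n ps)) (sort (vals w n qs)))"

definition leximin2 :: "(nat \<Rightarrow> real) \<Rightarrow> nat \<Rightarrow> nat \<Rightarrow> nat list \<Rightarrow> bool" where
  "leximin2 w n t ps \<longleftrightarrow> leximin w n t ps \<and>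
     (\<forall>qs. leximin w n t qs \<longrightarrow> \<not> lex_less qs ps)"

end

theory Submission
  imports Defs "HOL-Library.Multiset"
begin

text \<open>
  Suppose X_j > Y_j for some j. The pointwise minimum Z of the cut vectors X and Y is an
  allocation of M_t that is lexicographically smaller than X, and the pointwise maximum W is an
  allocation of M_(t+1). Since X is leximin^2, Z must be strictly worse than X in the leximin
  order. For sorted value vectors the leximin order is read off the capped sums
  \<open>\<Sum>i. min v_i u\<close> as functions of the cap u: the first threshold where they differ decides.
  Because min(\<cdot>, u) is concave, splitting the agents' intervals into meet and join can only increase
  capped sums, so the capped sums of X and Y are dominated by those of Z and W. Then the loss of Z
  against X forces W to beat Y in the leximin order, contradicting that Y is leximin.
\<close>

lemma first_difference:
  assumes "length xs = length ys" "xs \<noteq> ys"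
  obtains k where "k < length xs" "take k xs = take k ys" "xs ! k \<noteq> ys ! k"
proof -
  have ex: "\<exists>i. i < length xs \<and> xs ! i \<noteq> ys ! i"
    using assms nth_equalityI by blast
  define k where "k = (LEAST i. i < length xs \<and> xs ! i \<noteq> ys ! i)"
  have k: "k < length xs" "xs ! k \<noteq> ys ! k"
    using LeastI_ex[OF ex] unfolding k_def by auto
  moreover have "xs ! i = ys ! i" if "i < k" for i
    using not_less_Least[OF that[unfolded k_def]] k(1) that by auto
  then have "take k xs = take k ys"
    using k(1) assms(1) by (intro nth_equalityI) auto
  ultimately show ?thesis using that by blast
qed

lemma lex_less_total:
  fixes xs ys :: "'a::linorder list"
  assumes "length xs = length ys"
  shows "xs = ys \<or> lex_less xs ys \<or> lex_less ys xs"
proof (cases "xs = ys")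
  case False
  then obtain k where "k < length xs" "take k xs = take k ys" "xs ! k \<noteq> ys ! k"
    using assms first_difference by blast
  then show ?thesis
    unfolding lex_less_def using assms
    by (cases "xs ! k < ys ! k") (auto intro!: exI[of _ k] simp: not_less_iff_gr_or_eq)
qed simp

lemma lex_less_of_nth_le:
  fixes xs ys :: "'a::linorder list"
  assumes "length xs = length ys" "\<And>i. i < length xs \<Longrightarrow> xs ! i \<le> ys ! i" "xs \<noteq> ys"
  shows "lex_less xs ys"
proof -
  obtain k where "k < length xs" "take k xs = take k ys" "xs ! k \<noteq> ys ! k"
    using assms(1,3) first_difference by blast
  then show ?thesis
    unfolding lex_less_def using assms(1,2) by (auto intro!: exI[of _ k] simp: order_less_le)
qed

lemma lex_less_map2_min:
  fixes xs ys :: "'a::linorder list"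
  assumes "length xs = length ys" "j < length xs" "ys ! j < xs ! j"
  shows "lex_less (map2 min xs ys) xs"
proof (rule lex_less_of_nth_le)
  have "map2 min xs ys ! j \<noteq> xs ! j"
    using assms by simp
  then show "map2 min xs ys \<noteq> xs" by auto
qed (use assms(1) in simp_all)

definition capped_sum :: "'a::linordered_ab_group_add list \<Rightarrow> 'a \<Rightarrow> 'a" where
  "capped_sum xs u = (\<Sum>x\<leftarrow>xs. min x u)"

lemma capped_sum_conv_sum_nth: "capped_sum xs u = (\<Sum>i<length xs. min (xs ! i) u)"
  unfolding capped_sum_def by (simp add: sum_list_sum_nth atLeast0LessThan)

lemma capped_sum_sort [simp]: "capped_sum (sort xs) u = capped_sum xs u"
  unfolding capped_sum_def by (metis mset_map mset_sort sum_mset_sum_list)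

lemma lex_less_sorted_capped_sum:
  fixes xs ys :: "'a::linordered_ab_group_add list"
  assumes "sorted xs" "sorted ys" "length xs = length ys" "lex_less xs ys"
  obtains u0 u1 where "u0 < u1"
    "\<And>u. u \<le> u1 \<Longrightarrow> capped_sum xs u \<le> capped_sum ys u"
    "\<And>u. u0 < u \<Longrightarrow> u \<le> u1 \<Longrightarrow> capped_sum xs u < capped_sum ys u"
proof -
  obtain k where k: "k < length xs" "take k xs = take k ys" "xs ! k < ys ! k"
    using assms(3,4) unfolding lex_less_def by auto
  have nth_le: "min (xs ! i) u \<le> min (ys ! i) u" if "i < length xs" "u \<le> ys ! k" for i u
  proof (cases "i < k")
    case True
    then show ?thesis using k(2) by (metis nth_take order.refl)
  next
    case False
    then have "ys ! k \<le> ys ! i" using that(1) assms(2,3) by (simp add: sorted_nth_mono)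
    then show ?thesis using that(2) by simp
  qed
  show thesis
  proof (rule that)
    show "xs ! k < ys ! k" by (fact k(3))
    show "capped_sum xs u \<le> capped_sum ys u" if "u \<le> ys ! k" for u
      unfolding capped_sum_conv_sum_nth assms(3)[symmetric]
      using nth_le that by (intro sum_mono) simp
    show "capped_sum xs u < capped_sum ys u" if "xs ! k < u" "u \<le> ys ! k" for u
      unfolding capped_sum_conv_sum_nth assms(3)[symmetric]
    proof (rule sum_strict_mono_ex1)
      show "\<forall>i\<in>{..<length xs}. min (xs ! i) u \<le> min (ys ! i) u"
        using nth_le that(2) by simp
      show "\<exists>i\<in>{..<length xs}. min (xs ! i) u < min (ys ! i) u"
        using k(1) that by (intro bexI[of _ k]) auto
    qed simp
  qed
qed

lemma lex_less_sorted_by_capped_sum_exchange: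
  fixes xs ys xs' ys' :: "'a::linordered_ab_group_add list"
  assumes "lex_less xs ys"
    and exchange: "\<And>u. capped_sum ys u + capped_sum xs' u \<le> capped_sum xs u + capped_sum ys' u"
    and "sorted xs" "sorted ys" "sorted xs'" "sorted ys'"
    and "length xs = length ys" "length xs' = length ys'"
  shows "lex_less xs' ys'"
proof (rule ccontr)
  assume not_less: "\<not> lex_less xs' ys'"
  obtain u0 u1 where "u0 < u1"
    and "\<And>u. u \<le> u1 \<Longrightarrow> capped_sum xs u \<le> capped_sum ys u"
    and strict: "\<And>u. u0 < u \<Longrightarrow> u \<le> u1 \<Longrightarrow> capped_sum xs u < capped_sum ys u"
    using lex_less_sorted_capped_sum[OF assms(3,4,7,1)] by blast
  moreover have gap:
    "capped_sum xs' u - capped_sum ys' u \<le> capped_sum xs u - capped_sum ys u" for u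
    using exchange[of u] by (simp add: algebra_simps)
  ultimately have le: "capped_sum xs' u \<le> capped_sum ys' u" if "u \<le> u1" for u
    using that by (meson diff_le_0_iff_le order.trans)
  have lt: "capped_sum xs' u < capped_sum ys' u" if "u0 < u" "u \<le> u1" for u
    using that gap[of u] strict[of u]
    by (meson diff_less_0_iff_less le_less_trans)
  consider "xs' = ys'" | "lex_less ys' xs'"
    using lex_less_total[OF assms(8)] not_less by blast
  then show False
  proof cases
    case 1
    then show False using lt[of u1] \<open>u0 < u1\<close> by simp
  next
    case 2
    obtain v0 v1 where "v0 < v1"
      and le': "\<And>u. u \<le> v1 \<Longrightarrow> capped_sum ys' u \<le> capped_sum xs' u"
      and lt': "\<And>u. v0 < u \<Longrightarrow> u \<le> v1 \<Longrightarrow> capped_sum ys' u < capped_sum xs' u"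
      using lex_less_sorted_capped_sum[OF assms(6,5) assms(8)[symmetric] 2] by blast
    txt \<open>At the cap \<open>min u1 v1\<close> both weak comparisons apply and at least one is strict.\<close>
    define m where "m = min u1 v1"
    have "capped_sum xs' m = capped_sum ys' m"
      using le[of m] le'[of m] unfolding m_def by simp
    moreover have "u0 < m \<and> m \<le> u1 \<or> v0 < m \<and> m \<le> v1"
      using \<open>u0 < u1\<close> \<open>v0 < v1\<close> unfolding m_def by (cases "u1 \<le> v1") (auto simp: min_def)
    ultimately show False
      using lt[of m] lt'[of m] by auto
  qed
qed

lemma min_add_min_le_of_between:
  fixes x y z z' u :: real
  assumes "z + z' = x + y" "min x y \<le> z" "z \<le> max x y"
  shows "min x u + min y u \<le> min z u + min z' u"
  using assms by (auto simp: min_def max_def split: if_splits)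

lemma sorted_map2:
  assumes "sorted xs" "sorted ys" "length xs = length ys"
    and mono: "\<And>a b c d. a \<le> c \<Longrightarrow> b \<le> d \<Longrightarrow> f a b \<le> f c d"
  shows "sorted (map2 f xs ys)"
  unfolding sorted_iff_nth_mono
  using assms(1-3) by (auto intro!: mono simp: sorted_nth_mono)

lemma capped_increments_le_meet_join:
  fixes F :: "nat \<Rightarrow> real"
  assumes mono: "\<And>p q. p \<le> q \<Longrightarrow> q \<le> T \<Longrightarrow> F p \<le> F q"
    and "a \<le> b" "c \<le> d" "b \<le> T" "d \<le> T"
  shows "min (F b - F a) u + min (F d - F c) u \<le>
         min (F (min b d) - F (min a c)) u + min (F (max b d) - F (max a c)) u"
proof -
  have nested: "min (F q - F p) u + min (F q' - F p') u
      \<le> min (F q' - F p) u + min (F q - F p') u"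
    if "p \<le> p'" "p' \<le> q'" "q' \<le> q" "q \<le> T" for p q p' q'
  proof (rule min_add_min_le_of_between)
    have "F p \<le> F p'" "F q' \<le> F q"
      using that mono by simp_all
    then show "min (F q - F p) (F q' - F p') \<le> F q' - F p"
      and "F q' - F p \<le> max (F q - F p) (F q' - F p')"
      by auto
  qed simp
  show ?thesis
  proof (cases "a \<le> c"; cases "b \<le> d")
    assume "a \<le> c" "\<not> b \<le> d"
    then show ?thesis
      using nested[of a c d b] assms(3,4) by (simp add: min_def max_def)
  next
    assume "\<not> a \<le> c" "b \<le> d"
    then show ?thesis
      using nested[of c a b d] assms(2,5) by (simp add: min_def max_def add.commute)
  qed (auto simp: min_def max_def add.commute)
qed

lemma contig_nth_mono:
  assumes "contig n t ps" "i \<le> k" "k \<le> n"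
  shows "ps ! i \<le> ps ! k"
  using assms unfolding contig_def by (simp add: sorted_nth_mono)

lemma contig_map2:
  assumes "contig n t xs" "contig n s ys"
    and mono: "\<And>a b c d. a \<le> c \<Longrightarrow> b \<le> d \<Longrightarrow> f a b \<le> f c d" and "f 0 0 = 0"
  shows "contig n (f t s) (map2 f xs ys)"
proof -
  have xs: "length xs = n + 1" "xs ! 0 = 0" "xs ! n = t" "sorted xs"
    and ys: "length ys = n + 1" "ys ! 0 = 0" "ys ! n = s" "sorted ys"
    using assms(1,2) unfolding contig_def by auto
  have "sorted (map2 f xs ys)"
    using sorted_map2[OF xs(4) ys(4) _ mono] xs(1) ys(1) by simp
  then show ?thesis
    unfolding contig_def using xs ys \<open>f 0 0 = 0\<close> by simp
qed

lemma agent_val_eq_diff: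
  assumes "ps ! (i - 1) \<le> ps ! i"
  shows "agent_val w ps i = (\<Sum>k\<in>{1..ps ! i}. w k) - (\<Sum>k\<in>{1..ps ! (i - 1)}. w k)"
proof -
  obtain d where d: "ps ! i = ps ! (i - 1) + d"
    using assms le_Suc_ex by blast
  have "(\<Sum>k\<in>{1..ps ! (i - 1) + d}. w k)
      = (\<Sum>k\<in>{1..ps ! (i - 1)}. w k) + (\<Sum>k\<in>{ps ! (i - 1) + 1..ps ! (i - 1) + d}. w k)"
    by (rule sum.ub_add_nat) simp
  then show ?thesis
    unfolding agent_val_def d by simp
qed

lemma capped_sum_vals_le_meet_join:
  assumes xs: "contig n t xs" and ys: "contig n s ys"
    and nonneg: "\<And>i. i \<in> {1..max t s} \<Longrightarrow> 0 \<le> w i"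
  shows "capped_sum (vals w n xs) u + capped_sum (vals w n ys) u
    \<le> capped_sum (vals w n (map2 min xs ys)) u + capped_sum (vals w n (map2 max xs ys)) u"
proof -
  define F where "F q = (\<Sum>k\<in>{1..q}. w k)" for q
  have F_mono: "F p \<le> F q" if "p \<le> q" "q \<le> max t s" for p q
    unfolding F_def using that nonneg by (intro sum_mono2) auto
  have lengths: "length xs = n + 1" "length ys = n + 1"
    using xs ys unfolding contig_def by auto
  have "min (agent_val w xs i) u + min (agent_val w ys i) u
      \<le> min (agent_val w (map2 min xs ys) i) u + min (agent_val w (map2 max xs ys) i) u"
    if "i \<in> set [1..<n + 1]" for i
  proof -
    have i: "1 \<le> i" "i \<le> n" using that by auto
    have steps: "xs ! (i - 1) \<le> xs ! i" "ys ! (i - 1) \<le> ys ! i"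
      using contig_nth_mono[OF xs] contig_nth_mono[OF ys] i by auto
    have "xs ! i \<le> t" "ys ! i \<le> s"
      using contig_nth_mono[OF xs, of i n] contig_nth_mono[OF ys, of i n] xs ys i
      unfolding contig_def by auto
    then have bounds: "xs ! i \<le> max t s" "ys ! i \<le> max t s" by auto
    have "map2 min xs ys ! k = min (xs ! k) (ys ! k)" "map2 max xs ys ! k = max (xs ! k) (ys ! k)"
      if "k \<le> n" for k
      using that lengths by simp_all
    then have meet_join: "map2 min xs ys ! i = min (xs ! i) (ys ! i)"
      "map2 min xs ys ! (i - 1) = min (xs ! (i - 1)) (ys ! (i - 1))"
      "map2 max xs ys ! i = max (xs ! i) (ys ! i)"
      "map2 max xs ys ! (i - 1) = max (xs ! (i - 1)) (ys ! (i - 1))"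
      using i by simp_all
    have "agent_val w (map2 min xs ys) i
        = F (min (xs ! i) (ys ! i)) - F (min (xs ! (i - 1)) (ys ! (i - 1)))"
      using agent_val_eq_diff[of "map2 min xs ys" i w] min.mono[OF steps]
      unfolding meet_join F_def by simp
    moreover have "agent_val w (map2 max xs ys) i
        = F (max (xs ! i) (ys ! i)) - F (max (xs ! (i - 1)) (ys ! (i - 1)))"
      using agent_val_eq_diff[of "map2 max xs ys" i w] max.mono[OF steps]
      unfolding meet_join F_def by simp
    moreover have "agent_val w xs i = F (xs ! i) - F (xs ! (i - 1))"
      and "agent_val w ys i = F (ys ! i) - F (ys ! (i - 1))"
      using agent_val_eq_diff steps unfolding F_def by simp_all
    ultimately show ?thesis
      using capped_increments_le_meet_join[OF F_mono steps bounds] by simp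
  qed
  then have "(\<Sum>i\<leftarrow>[1..<n + 1]. min (agent_val w xs i) u + min (agent_val w ys i) u)
      \<le> (\<Sum>i\<leftarrow>[1..<n + 1]. min (agent_val w (map2 min xs ys) i) u
                              + min (agent_val w (map2 max xs ys) i) u)"
    by (rule sum_list_mono)
  then show ?thesis
    unfolding capped_sum_def vals_def by (simp add: sum_list_addf o_def)
qed

lemma lex_less_sort_vals_of_leximin2:
  assumes xs: "leximin2 w n t xs" and ys: "contig n t ys" "lex_less ys xs"
  shows "lex_less (sort (vals w n ys)) (sort (vals w n xs))"
proof -
  have "\<not> lex_less (sort (vals w n xs)) (sort (vals w n ys))"
    using xs ys(1) unfolding leximin2_def leximin_def by blast
  moreover have "sort (vals w n ys) \<noteq> sort (vals w n xs)"
  proof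
    assume "sort (vals w n ys) = sort (vals w n xs)"
    then have "leximin w n t ys"
      using xs ys(1) unfolding leximin2_def leximin_def by simp
    then show False
      using xs ys(2) unfolding leximin2_def by blast
  qed
  ultimately show ?thesis
    using lex_less_total[of "sort (vals w n ys)" "sort (vals w n xs)"] by (simp add: vals_def)
qed

theorem mainTheorem5:
  fixes w :: "nat \<Rightarrow> real" and n T t j :: nat and X Y :: "nat list"
  assumes "n \<ge> 1"
    and "\<And>i. i \<in> {1..T} \<Longrightarrow> w i \<ge> 0"
    and "1 \<le> t" and "t < T"
    and "leximin2 w n t X" and "leximin2 w n (t + 1) Y"
    and "j \<in> {1..n}"
  shows "X ! j \<le> Y ! j"
proof (rule ccontr)
  assume "\<not> X ! j \<le> Y ! j"
  define Z W where "Z = map2 min X Y" and "W = map2 max X Y"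
  have X: "contig n t X" and Y: "leximin w n (t + 1) Y" "contig n (t + 1) Y"
    using assms(5,6) unfolding leximin2_def leximin_def by auto
  have Z: "contig n t Z" and W: "contig n (t + 1) W"
    using contig_map2[where f = min, OF X Y(2) min.mono]
      contig_map2[where f = max, OF X Y(2) max.mono]
    unfolding Z_def W_def by simp_all
  have "lex_less Z X"
    unfolding Z_def using X Y(2) assms(7) \<open>\<not> X ! j \<le> Y ! j\<close>
    by (intro lex_less_map2_min[where j = j]) (auto simp: contig_def)
  then have "lex_less (sort (vals w n Z)) (sort (vals w n X))"
    using lex_less_sort_vals_of_leximin2[OF assms(5) Z] by blast
  moreover have "capped_sum (sort (vals w n X)) u + capped_sum (sort (vals w n Y)) u
      \<le> capped_sum (sort (vals w n Z)) u + capped_sum (sort (vals w n W)) u" for u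
    unfolding Z_def W_def capped_sum_sort
    by (rule capped_sum_vals_le_meet_join[OF X Y(2)]) (use assms(2,4) in simp)
  ultimately have "lex_less (sort (vals w n Y)) (sort (vals w n W))"
    by (rule lex_less_sorted_by_capped_sum_exchange) (simp_all add: vals_def)
  then show False
    using Y W unfolding leximin_def by blast
qed

end
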